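(* In $G_3$, the subsemigroup generated by $A=\{a,b,c\}$ is free of rank $3$ (i.e., two words over $A$, without inverses, represent the same element of $G_3$ only if they are identical).
   Context: Let $X=\{1,2,3\}$ and $T$ the ternary rooted tree with vertex set $X^*$. $\mathrm{Aut}(T)$ is the group of root-preserving automorphisms with product left-to-right: $(gh)(u)=h(g(u))$. Sections $g|_u$ are defined by $g(uv)=g(u)\,g|_u(v)$; we write $g=(g|_1,g|_2,g|_3)\lambda_g$ with $\lambda_g\in S_3$ the action on the first level, so $g(xw)=\lambda_g(x)g|_x(w)$; $e$ is the identity. $G_3=\langle a,b,c\rangle\le\mathrm{Aut}(T)$ with $a=(a,b,e)(1\,2)$, $b=(e,b,c)(2\,3)$, $c=(a,e,c)(3\,1)$. *)

theory Defs
  imports Main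
begin

text \<open>Alphabet X = {1,2,3}; vertices of the ternary tree are words over X.\<close>
datatype letter = X1 | X2 | X3

datatype gen = GA | GB | GC

text \<open>Action of the generators on the tree, following the wreath recursion
  a = (a,b,e)(1 2), b = (e,b,c)(2 3), c = (a,e,c)(3 1), i.e.
  g(x w) = lambda_g(x) g|_x(w).\<close>
fun act :: "gen \<Rightarrow> letter list \<Rightarrow> letter list" where
  "act g [] = []"
| "act GA (X1 # w) = X2 # act GA w"
| "act GA (X2 # w) = X1 # act GB w"
| "act GA (X3 # w) = X3 # w"
| "act GB (X1 # w) = X1 # w"
| "act GB (X2 # w) = X3 # act GB w"
| "act GB (X3 # w) = X2 # act GC w"
| "act GC (X1 # w) = X3 # act GA w"
| "act GC (X2 # w) = X2 # w"
| "act GC (X3 # w) = X1 # act GC w"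

text \<open>The element of Aut(T) represented by a positive word g1 g2 ... gn over {a,b,c},
  with the left-to-right product (gh)(u) = h(g(u)): g1 acts first.\<close>
fun word_act :: "gen list \<Rightarrow> letter list \<Rightarrow> letter list" where
  "word_act [] = id"
| "word_act (g # gs) = word_act gs \<circ> act g"

end

theory Submission
  imports Defs
begin

text \<open>
  Each generator fixes one letter and swaps the other two, and its section at a moved letter x
  is the generator indexed by x (a, b, c for 1, 2, 3), whatever the generator.  So sections of
  positive words are positive words, no longer than the original, and equal elements have equal
  sections; we induct on the total length of two words with the same action.  A common first
  generator cancels.  A nonempty word w cannot act trivially: its section at the letter fixed by
  its first generator is shorter and trivial, hence empty, so w is a power g^n; but the section
  of g^n at a moved letter is a trivial word of the same length alternating between two
  different generators.  If v = g v' and w = h w' with g \<noteq> h, the sections at the letter moved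
  by both force v' and w' to be powers of h and g, and the sections at the letters fixed by g
  and by h then give |v'| = |w'| + 1 and |w'| = |v'| + 1.
\<close>

fun fixed_letter :: "gen \<Rightarrow> letter" where
  "fixed_letter GA = X3"
| "fixed_letter GB = X1"
| "fixed_letter GC = X2"

fun gen_at :: "letter \<Rightarrow> gen" where
  "gen_at X1 = GA"
| "gen_at X2 = GB"
| "gen_at X3 = GC"

fun root_perm :: "gen \<Rightarrow> letter \<Rightarrow> letter" where
  "root_perm GA X1 = X2" | "root_perm GA X2 = X1" | "root_perm GA X3 = X3"
| "root_perm GB X1 = X1" | "root_perm GB X2 = X3" | "root_perm GB X3 = X2"
| "root_perm GC X1 = X3" | "root_perm GC X2 = X2" | "root_perm GC X3 = X1"

text \<open>Sections equal to the identity are dropped, so sections of positive words are positive words.\<close>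
fun word_section :: "gen list \<Rightarrow> letter \<Rightarrow> gen list" where
  "word_section [] x = []"
| "word_section (g # v) x =
     (if x = fixed_letter g then word_section v x
      else gen_at x # word_section v (root_perm g x))"

lemma act_Cons:
  "act g (x # u) = root_perm g x # (if x = fixed_letter g then u else act (gen_at x) u)"
  by (cases g; cases x) simp_all

lemma root_perm_fixed_letter [simp]: "root_perm g (fixed_letter g) = fixed_letter g"
  by (cases g) simp_all

lemma root_perm_root_perm [simp]: "root_perm g (root_perm g x) = x"
  by (cases g; cases x) simp_all

lemma root_perm_eq_fixed_letter_iff [simp]:
  "root_perm g x = fixed_letter g \<longleftrightarrow> x = fixed_letter g"
  by (cases g; cases x) simp_all

lemma root_perm_eq_self_iff: "root_perm g x = x \<longleftrightarrow> x = fixed_letter g"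
  by (cases g; cases x) simp_all

lemma root_perm_fixed_letter_commute:
  "root_perm g (fixed_letter h) = root_perm h (fixed_letter g)"
  by (cases g; cases h) simp_all

lemma fixed_letter_eq_iff [simp]: "fixed_letter g = fixed_letter h \<longleftrightarrow> g = h"
  by (cases g; cases h) simp_all

lemma gen_at_eq_iff [simp]: "gen_at x = gen_at y \<longleftrightarrow> x = y"
  by (cases x; cases y) simp_all

lemma surj_act: "surj (act g)"
proof -
  have "\<exists>u'. act g u' = u" for u
  proof (induction u arbitrary: g)
    case Nil
    show ?case by (metis act.simps(1))
  next
    case (Cons y u)
    define x where "x = root_perm g y"
    obtain u' where "act (gen_at x) u' = u"
      using Cons.IH by blast
    then have "act g (x # (if x = fixed_letter g then u else u')) = y # u"
      by (simp add: act_Cons x_def)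
    then show ?case by blast
  qed
  then show ?thesis by (metis surjI)
qed

lemma word_act_Cons_cancel:
  assumes "word_act (g # v) = word_act (g # w)"
  shows "word_act v = word_act w"
  using assms surj_act[of g] by (auto intro: surj_fun_eq)

lemma word_act_letter_Cons:
  "word_act v (x # u) = fold root_perm v x # word_act (word_section v x) u"
  by (induction v arbitrary: x u) (auto simp: act_Cons)

lemma word_act_word_section_cong:
  assumes "word_act v = word_act w"
  shows "word_act (word_section v x) = word_act (word_section w x)"
proof
  fix u
  show "word_act (word_section v x) u = word_act (word_section w x) u"
    using fun_cong[OF assms, of "x # u"] by (simp add: word_act_letter_Cons)
qed

lemma word_act_word_section_eq_id:
  "word_act v = id \<Longrightarrow> word_act (word_section v x) = id"
  using word_act_word_section_cong[of v "[]" x] by simp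

lemma length_word_section_le: "length (word_section v x) \<le> length v"
  by (induction v arbitrary: x) (auto simp: le_SucI)

lemma length_word_section_less:
  "x = fixed_letter g \<Longrightarrow> length (word_section (g # v) x) < length (g # v)"
  using length_word_section_le[of v x] by simp

lemma hd_word_section: "word_section v x \<noteq> [] \<Longrightarrow> hd (word_section v x) = gen_at x"
  by (induction v arbitrary: x) auto

lemma word_section_eq_Nil_iff:
  "word_section v (fixed_letter g) = [] \<longleftrightarrow> v = replicate (length v) g"
  by (induction v) auto

lemma length_word_section_replicate:
  "x \<noteq> fixed_letter g \<Longrightarrow> length (word_section (replicate n g) x) = n"
  by (induction n arbitrary: x) (auto simp: root_perm_eq_self_iff)

lemma length_word_section_Cons_replicate:
  assumes "g \<noteq> h"
  shows "length (word_section (g # replicate n h) (fixed_letter g)) = n"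
    and "length (word_section (g # replicate n h) (fixed_letter h)) = Suc n"
proof -
  have "root_perm g (fixed_letter h) \<noteq> fixed_letter h"
    using assms by (simp add: root_perm_eq_self_iff)
  then show "length (word_section (g # replicate n h) (fixed_letter g)) = n"
    and "length (word_section (g # replicate n h) (fixed_letter h)) = Suc n"
    using assms by (simp_all add: length_word_section_replicate)
qed

lemma word_act_eq_id_imp_replicate:
  assumes "word_act u = id" and "u \<noteq> []"
    and shorter: "\<And>u'. length u' < length u \<Longrightarrow> word_act u' = id \<Longrightarrow> u' = []"
  shows "u = replicate (length u) (hd u)"
proof -
  obtain g v where u: "u = g # v"
    using \<open>u \<noteq> []\<close> by (cases u) auto
  have "word_section u (fixed_letter g) = []"
    using shorter length_word_section_less word_act_word_section_eq_id assms(1) u by metis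
  then show ?thesis
    using word_section_eq_Nil_iff u by auto
qed

lemma word_act_eq_id_iff: "word_act u = id \<longleftrightarrow> u = []"
proof
  show "word_act u = id \<Longrightarrow> u = []"
  proof (induction "length u" arbitrary: u rule: less_induct)
    case less
    show "u = []"
    proof (rule ccontr)
      assume "u \<noteq> []"
      then obtain g n where u: "u = replicate (Suc n) g"
        using word_act_eq_id_imp_replicate[of u] less by (cases u) auto
      obtain x where "x \<noteq> fixed_letter g"
        by (metis letter.distinct(1))
      then have x: "root_perm g x \<noteq> x"
        by (simp add: root_perm_eq_self_iff)
      show False
      proof (cases n)
        case 0
        then show False
          using fun_cong[OF less.prems, of "[x]"] x u by (simp add: act_Cons)
      next
        case (Suc m)
        define s where "s = word_section u x"
        have s: "s = gen_at x # gen_at (root_perm g x) # word_section (replicate m g) x"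
          using x u Suc by (simp add: s_def root_perm_eq_self_iff)
        have "length s = length u"
          using x u by (simp add: s_def length_word_section_replicate root_perm_eq_self_iff)
        moreover have "word_act s = id"
          using word_act_word_section_eq_id less.prems by (simp add: s_def)
        ultimately have "s = replicate (length s) (hd s)"
          using word_act_eq_id_imp_replicate less s by (metis list.distinct(1))
        then show False
          using s x by (cases "length s") auto
      qed
    qed
  qed
qed simp

lemma word_act_Cons_distinct_heads_replicate:
  assumes "g \<noteq> h" and eq: "word_act (g # v) = word_act (h # w)"
    and IH: "\<And>v' w'. length v' + length w' < length v + length w + 2 \<Longrightarrow>
                word_act v' = word_act w' \<Longrightarrow> v' = w'"
  shows "v = replicate (length v) h \<and> w = replicate (length w) g"
proof -
  define p q where "p = fixed_letter g" and "q = fixed_letter h"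
  define z where "z = root_perm g q"
  have gz: "root_perm g z = q"
    by (simp add: z_def)
  have "z = root_perm h p"
    unfolding z_def p_def q_def by (rule root_perm_fixed_letter_commute)
  then have hz: "root_perm h z = p"
    by simp
  have "z \<noteq> p" "z \<noteq> q"
    using \<open>g \<noteq> h\<close> gz hz by (auto simp: p_def q_def root_perm_eq_self_iff)
  have "word_act (word_section (g # v) z) = word_act (word_section (h # w) z)"
    using word_act_word_section_cong[OF eq] .
  then have "word_act (gen_at z # word_section v q) = word_act (gen_at z # word_section w p)"
    using \<open>z \<noteq> p\<close> \<open>z \<noteq> q\<close> gz hz by (simp only: word_section.simps p_def q_def if_False)
  then have "word_act (word_section v q) = word_act (word_section w p)"
    by (rule word_act_Cons_cancel)
  then have "word_section v q = word_section w p"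
    using IH length_word_section_le[of v q] length_word_section_le[of w p] by fastforce
  moreover have "p \<noteq> q"
    using \<open>g \<noteq> h\<close> by (simp add: p_def q_def)
  ultimately have "word_section v q = []" "word_section w p = []"
    using hd_word_section by (metis gen_at_eq_iff)+
  then show ?thesis
    using word_section_eq_Nil_iff by (simp add: p_def q_def)
qed

lemma word_act_Cons_distinct_heads:
  assumes "g \<noteq> h" and eq: "word_act (g # v) = word_act (h # w)"
    and IH: "\<And>v' w'. length v' + length w' < length v + length w + 2 \<Longrightarrow>
                word_act v' = word_act w' \<Longrightarrow> v' = w'"
  shows False
proof -
  obtain m k where v: "v = replicate m h" and w: "w = replicate k g"
    using word_act_Cons_distinct_heads_replicate[OF assms] by blast
  note lengths = length_word_section_Cons_replicate[OF \<open>g \<noteq> h\<close>, of m]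
    length_word_section_Cons_replicate[OF \<open>g \<noteq> h\<close>[symmetric], of k]
  have "word_section (g # v) (fixed_letter g) = word_section (h # w) (fixed_letter g)"
    using lengths by (intro IH word_act_word_section_cong[OF eq]) (simp add: v w)
  then have "m = Suc k"
    using lengths by (metis v w)
  have "word_section (g # v) (fixed_letter h) = word_section (h # w) (fixed_letter h)"
    using lengths by (intro IH word_act_word_section_cong[OF eq]) (simp add: v w)
  then have "Suc m = k"
    using lengths by (metis v w)
  with \<open>m = Suc k\<close> show False
    by simp
qed

lemma word_act_eq_imp_eq: "word_act v = word_act w \<Longrightarrow> v = w"
proof (induction "length v + length w" arbitrary: v w rule: less_induct)
  case less
  show ?case
  proof (cases "v = [] \<or> w = []")
    case True
    then show ?thesis
      using less.prems word_act_eq_id_iff by (metis word_act.simps(1))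
  next
    case False
    then obtain g v' h w' where v: "v = g # v'" and w: "w = h # w'"
      by (meson neq_Nil_conv)
    have eq: "word_act (g # v') = word_act (h # w')"
      using less.prems v w by simp
    have IH: "\<And>v'' w''. length v'' + length w'' < length v' + length w' + 2 \<Longrightarrow>
                word_act v'' = word_act w'' \<Longrightarrow> v'' = w''"
      using less.hyps v w by simp
    show "v = w"
    proof (cases "g = h")
      case True
      then have "word_act v' = word_act w'"
        using eq word_act_Cons_cancel by blast
      with IH have "v' = w'"
        by simp
      then show ?thesis
        using True v w by simp
    next
      case False
      then show ?thesis
        using word_act_Cons_distinct_heads eq IH by blast
    qed
  qed
qed

theorem theorem5p2:
  fixes v w :: "gen list"
  assumes "v \<noteq> []" and "w \<noteq> []"
    and "word_act v = word_act w"
  shows "v = w"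
  using word_act_eq_imp_eq[OF assms(3)] .

end
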